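(* Let $X_{\mathcal M}$ and $Y_{\mathcal M}$ be independent multiterminal sources on $\mathcal M$, and let $Z_{\mathcal M}$ be the clubbed source, $Z_i=(X_i,Y_i)$ for $i\in\mathcal M$. Then $$\mathbf I(Z_{\mathcal M})\ge\mathbf I(X_{\mathcal M})+\mathbf I(Y_{\mathcal M}),$$ with equality if and only if $\Pi^*_X\cap\Pi^*_Y\ne\emptyset$.
   Context: Let $\mathcal M=\{1,\dots,m\}$, $m\ge2$. A source $W_{\mathcal M}=(W_1,\dots,W_m)$ is a tuple of jointly distributed finite-valued random variables, and $W_A=(W_i:i\in A)$. The sources $X_{\mathcal M}$ and $Y_{\mathcal M}$ being independent means the tuple $X_{\mathcal M}$ is independent of the tuple $Y_{\mathcal M}$. For a partition $\mathcal P$ of $\mathcal M$ with $|\mathcal P|\ge2$, $\Delta_W(\mathcal P)=\frac1{|\mathcal P|-1}[\sum_{A\in\mathcal P}H(W_A)-H(W_{\mathcal M})]$, and $\mathbf I(W_{\mathcal M})=\min_{\mathcal P}\Delta_W(\mathcal P)$. $\Pi^*_X$ (resp. $\Pi^*_Y$) is the set of partitions attaining the minimum for $X_{\mathcal M}$ (resp. $Y_{\mathcal M}$). *)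

theory Defs
  imports "HOL-Probability.Probability" "HOL-Library.Disjoint_Sets"
begin

text \<open>A multiterminal source on M = {1..m} is modelled by a finitely supported pmf W
  on functions nat => 'a; the i-th component W_i is the i-th coordinate.\<close>

definition pmf_entropy :: "'a pmf \<Rightarrow> real" where
  "pmf_entropy p = (\<Sum>x\<in>set_pmf p. - pmf p x * log 2 (pmf p x))"

definition marg :: "(nat \<Rightarrow> 'a) pmf \<Rightarrow> nat set \<Rightarrow> (nat \<Rightarrow> 'a) pmf" where
  "marg W A = map_pmf (\<lambda>w. restrict w A) W"

definition Hs :: "(nat \<Rightarrow> 'a) pmf \<Rightarrow> nat set \<Rightarrow> real" where
  "Hs W A = pmf_entropy (marg W A)"

definition parts :: "nat \<Rightarrow> nat set set set" where
  "parts m = {P. partition_on {1..m} P \<and> card P \<ge> 2}"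

definition Delta :: "nat \<Rightarrow> (nat \<Rightarrow> 'a) pmf \<Rightarrow> nat set set \<Rightarrow> real" where
  "Delta m W P = ((\<Sum>A\<in>P. Hs W A) - Hs W {1..m}) / (real (card P) - 1)"

definition MI :: "nat \<Rightarrow> (nat \<Rightarrow> 'a) pmf \<Rightarrow> real" where
  "MI m W = Min (Delta m W ` parts m)"

definition optparts :: "nat \<Rightarrow> (nat \<Rightarrow> 'a) pmf \<Rightarrow> nat set set set" where
  "optparts m W = {P \<in> parts m. Delta m W P = MI m W}"

end

theory Submission
  imports Defs
begin

text \<open>For independent X and Y, every marginal of the clubbed source Z is an injective image of
  the product of the corresponding marginals of X and Y, so all joint entropies add:
  H(Z_A) = H(X_A) + H(Y_A). Hence Delta_Z = Delta_X + Delta_Y on every partition, and minimising a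
  sum of two functions gives at least the sum of their minima, with equality exactly when some
  partition minimises both.\<close>

lemma pmf_entropy_map_inj:
  assumes "inj_on f (set_pmf p)"
  shows "pmf_entropy (map_pmf f p) = pmf_entropy p"
proof -
  have "pmf_entropy (map_pmf f p)
      = (\<Sum>x\<in>set_pmf p. - pmf (map_pmf f p) (f x) * log 2 (pmf (map_pmf f p) (f x)))"
    using assms by (simp add: pmf_entropy_def sum.reindex)
  also have "\<dots> = pmf_entropy p"
    unfolding pmf_entropy_def using assms by (intro sum.cong) (simp_all add: pmf_map_inj)
  finally show ?thesis .
qed

lemma pmf_entropy_pair:
  assumes "finite (set_pmf p)" and "finite (set_pmf q)"
  shows "pmf_entropy (pair_pmf p q) = pmf_entropy p + pmf_entropy q"
proof -
  let ?h = "\<lambda>x::real. - x * log 2 x"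
  have "pmf_entropy (pair_pmf p q) = (\<Sum>(a, b)\<in>set_pmf p \<times> set_pmf q. ?h (pmf p a * pmf q b))"
    unfolding pmf_entropy_def set_pair_pmf by (intro sum.cong refl) (auto simp: pmf_pair)
  also have "\<dots> = (\<Sum>a\<in>set_pmf p. \<Sum>b\<in>set_pmf q. ?h (pmf p a * pmf q b))"
    by (simp add: sum.cartesian_product)
  also have "\<dots> = (\<Sum>a\<in>set_pmf p. \<Sum>b\<in>set_pmf q. ?h (pmf p a) * pmf q b + pmf p a * ?h (pmf q b))"
    by (intro sum.cong refl) (simp add: log_mult pmf_positive algebra_simps)
  also have "\<dots> = (\<Sum>a\<in>set_pmf p.
      ?h (pmf p a) * (\<Sum>b\<in>set_pmf q. pmf q b) + pmf p a * (\<Sum>b\<in>set_pmf q. ?h (pmf q b)))"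
    by (simp only: sum.distrib flip: sum_distrib_left)
  also have "\<dots> = (\<Sum>a\<in>set_pmf p. ?h (pmf p a)) * (\<Sum>b\<in>set_pmf q. pmf q b)
      + (\<Sum>a\<in>set_pmf p. pmf p a) * (\<Sum>b\<in>set_pmf q. ?h (pmf q b))"
    by (simp only: sum.distrib flip: sum_distrib_right)
  also have "\<dots> = pmf_entropy p + pmf_entropy q"
    using assms by (simp add: sum_pmf_eq_1 pmf_entropy_def)
  finally show ?thesis .
qed

abbreviation clubbed :: "((nat \<Rightarrow> 'a) \<times> (nat \<Rightarrow> 'b)) pmf \<Rightarrow> (nat \<Rightarrow> 'a \<times> 'b) pmf" where
  "clubbed J \<equiv> map_pmf (\<lambda>(x, y). (\<lambda>i. (x i, y i))) J"

lemma set_pmf_marg_extensional: "set_pmf (marg W A) \<subseteq> extensional A"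
  by (auto simp: marg_def)

lemma inj_on_zip_restrict:
  "inj_on (\<lambda>(u, v). restrict (\<lambda>i. (u i, v i)) A) (extensional A \<times> extensional A)"
  by (auto simp: inj_on_def fun_eq_iff extensional_def restrict_def split: if_splits) metis+

lemma Hs_clubbed:
  assumes "finite (set_pmf X)" and "finite (set_pmf Y)"
  shows "Hs (clubbed (pair_pmf X Y)) A = Hs X A + Hs Y A"
proof -
  define zip_A :: "(nat \<Rightarrow> 'a) \<times> (nat \<Rightarrow> 'b) \<Rightarrow> nat \<Rightarrow> 'a \<times> 'b"
    where "zip_A = (\<lambda>(u, v). restrict (\<lambda>i. (u i, v i)) A)"
  have "marg (clubbed (pair_pmf X Y)) A
      = map_pmf zip_A (map_pmf (\<lambda>(x, y). (restrict x A, restrict y A)) (pair_pmf X Y))"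
    unfolding marg_def pmf.map_comp
    by (intro map_pmf_cong refl) (auto simp: zip_A_def restrict_def)
  also have "\<dots> = map_pmf zip_A (pair_pmf (marg X A) (marg Y A))"
    by (simp add: map_pair marg_def)
  finally have marg_eq: "marg (clubbed (pair_pmf X Y)) A
      = map_pmf zip_A (pair_pmf (marg X A) (marg Y A))" .
  have "inj_on zip_A (set_pmf (pair_pmf (marg X A) (marg Y A)))"
    unfolding zip_A_def set_pair_pmf
    by (rule inj_on_subset[OF inj_on_zip_restrict]) (intro Sigma_mono set_pmf_marg_extensional)
  then have "Hs (clubbed (pair_pmf X Y)) A
      = pmf_entropy (pair_pmf (marg X A) (marg Y A))"
    unfolding Hs_def marg_eq by (rule pmf_entropy_map_inj)
  also have "\<dots> = Hs X A + Hs Y A"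
    unfolding Hs_def using assms by (intro pmf_entropy_pair) (simp_all add: marg_def)
  finally show ?thesis .
qed

lemma Delta_clubbed:
  assumes "finite (set_pmf X)" and "finite (set_pmf Y)"
  shows "Delta m (clubbed (pair_pmf X Y)) P = Delta m X P + Delta m Y P"
  unfolding Delta_def Hs_clubbed[OF assms] by (simp add: sum.distrib flip: add_divide_distrib)

lemma add_le_add_eq_imp_eq:
  fixes a b c d :: "'a::linordered_cancel_ab_semigroup_add"
  assumes "a \<le> c" and "b \<le> d" and "a + b = c + d"
  shows "a = c \<and> b = d"
proof (intro conjI)
  show "a = c"
    using add_less_le_mono[of a c b d] assms by (auto simp: order.strict_iff_order)
  show "b = d"
    using add_le_less_mono[of a c b d] assms by (auto simp: order.strict_iff_order)
qed

lemma Min_image_add_ge: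
  fixes f g :: "'c \<Rightarrow> 'd::linordered_cancel_ab_semigroup_add"
  assumes "finite S" and "S \<noteq> {}"
  shows "Min (f ` S) + Min (g ` S) \<le> Min ((\<lambda>x. f x + g x) ` S)"
proof (rule Min.boundedI)
  show "finite ((\<lambda>x. f x + g x) ` S)" "(\<lambda>x. f x + g x) ` S \<noteq> {}"
    using assms by simp_all
next
  fix y assume "y \<in> (\<lambda>x. f x + g x) ` S"
  then obtain x where "x \<in> S" "y = f x + g x" by blast
  with assms(1) show "Min (f ` S) + Min (g ` S) \<le> y"
    by (simp add: add_mono)
qed

lemma Min_image_add_eq_iff:
  fixes f g :: "'c \<Rightarrow> 'd::linordered_cancel_ab_semigroup_add"
  assumes "finite S" and "S \<noteq> {}"
  shows "Min ((\<lambda>x. f x + g x) ` S) = Min (f ` S) + Min (g ` S)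
    \<longleftrightarrow> (\<exists>x\<in>S. f x = Min (f ` S) \<and> g x = Min (g ` S))"
proof
  have "Min ((\<lambda>x. f x + g x) ` S) \<in> (\<lambda>x. f x + g x) ` S"
    using assms by (intro Min_in) auto
  then obtain x where x: "x \<in> S" "Min ((\<lambda>x. f x + g x) ` S) = f x + g x"
    by blast
  have f_ge: "Min (f ` S) \<le> f x" and g_ge: "Min (g ` S) \<le> g x"
    using x(1) assms(1) by simp_all
  assume "Min ((\<lambda>x. f x + g x) ` S) = Min (f ` S) + Min (g ` S)"
  then have "Min (f ` S) + Min (g ` S) = f x + g x"
    using x(2) by simp
  then have "Min (f ` S) = f x \<and> Min (g ` S) = g x"
    using f_ge g_ge by (intro add_le_add_eq_imp_eq)
  with x(1) show "\<exists>x\<in>S. f x = Min (f ` S) \<and> g x = Min (g ` S)" by auto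
next
  assume "\<exists>x\<in>S. f x = Min (f ` S) \<and> g x = Min (g ` S)"
  then obtain x where x: "x \<in> S" "f x + g x = Min (f ` S) + Min (g ` S)" by auto
  have "Min ((\<lambda>x. f x + g x) ` S) \<le> f x + g x"
    using assms(1) x(1) by (intro Min_le) auto
  then have "Min ((\<lambda>x. f x + g x) ` S) \<le> Min (f ` S) + Min (g ` S)"
    unfolding x(2) .
  with Min_image_add_ge[OF assms] show "Min ((\<lambda>x. f x + g x) ` S) = Min (f ` S) + Min (g ` S)"
    by (rule antisym[rotated])
qed

lemma finite_parts: "finite (parts m)"
proof (rule finite_subset)
  show "parts m \<subseteq> Pow (Pow {1..m})"
    unfolding parts_def partition_on_def by auto
qed simp

lemma parts_nonempty:
  assumes "m \<ge> 2"
  shows "parts m \<noteq> {}"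
proof -
  let ?singletons = "(\<lambda>i. {i}) ` {1..m}"
  have "partition_on {1..m} ?singletons"
    by (auto simp: partition_on_def disjoint_def)
  moreover have "card ?singletons = m"
    by (simp add: card_image)
  ultimately have "?singletons \<in> parts m"
    using assms by (simp add: parts_def)
  then show ?thesis by blast
qed

theorem proposition3:
  fixes m :: nat and J :: "((nat \<Rightarrow> 'a) \<times> (nat \<Rightarrow> 'b)) pmf"
  assumes "m \<ge> 2"
    and "finite (set_pmf J)"
    and "J = pair_pmf (map_pmf fst J) (map_pmf snd J)"
  defines "X \<equiv> map_pmf fst J"
    and "Y \<equiv> map_pmf snd J"
    and "Z \<equiv> map_pmf (\<lambda>(x, y). (\<lambda>i. (x i, y i))) J"
  shows "MI m Z \<ge> MI m X + MI m Y
         \<and> (MI m Z = MI m X + MI m Y \<longleftrightarrow> optparts m X \<inter> optparts m Y \<noteq> {})"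
proof -
  have "finite (set_pmf X)" "finite (set_pmf Y)"
    using assms(2) unfolding X_def Y_def by simp_all
  then have "Delta m Z = (\<lambda>P. Delta m X P + Delta m Y P)"
    unfolding Z_def assms(3)[folded X_def Y_def] by (intro ext Delta_clubbed)
  then have MI_Z: "MI m Z = Min ((\<lambda>P. Delta m X P + Delta m Y P) ` parts m)"
    by (simp add: MI_def)
  have common_opt: "optparts m X \<inter> optparts m Y \<noteq> {}
      \<longleftrightarrow> (\<exists>P\<in>parts m. Delta m X P = MI m X \<and> Delta m Y P = MI m Y)"
    by (auto simp: optparts_def)
  have parts: "finite (parts m)" "parts m \<noteq> {}"
    using finite_parts parts_nonempty[OF assms(1)] .
  show ?thesis
    unfolding MI_Z common_opt unfolding MI_def
    using Min_image_add_ge[OF parts, of "Delta m X" "Delta m Y"]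
      Min_image_add_eq_iff[OF parts, of "Delta m X" "Delta m Y"]
    by simp
qed

end
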